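(* Let $\boldsymbol z,\boldsymbol m\in\{0,1\}^n$ and $\boldsymbol y\in\overline{\mathbb R}^n$ with $y_i\in\mathbb R$ if $m_i=1$ and $y_i\in\{+\infty,-\infty\}$ if $m_i=0$. Let $\mathcal N_{11}=\{j:z_j=m_j=1\}$, $n_{11}=|\mathcal N_{11}|$, and write $\mathcal N_{11}=\{j_1,\dots,j_{n_{11}}\}$ with $\mathrm{rank}_{j_1}(\boldsymbol y)<\dots<\mathrm{rank}_{j_{n_{11}}}(\boldsymbol y)$. For an integer $0\le L\le n_{11}$, $c\in\mathbb R$ and $\kappa>0$, let $\mathcal H_L=\{\boldsymbol\delta\in\mathbb R^n:\sum_{i\in\mathcal N_{11}}\mathbf 1(\delta_i>c)\le L\}$, $\mathcal A_L=\{j_{n_{11}-L+1},\dots,j_{n_{11}}\}$ if $L\ge1$ and $\mathcal A_0=\emptyset$, $\gamma=\max\{y_i:z_i=m_i=1\}-\min\{y_i:z_i=0,m_i=1\}+\kappa$, and $\boldsymbol\eta_L\in\mathbb R^n$ with $\eta_{L,i}=\gamma$ for $i\in\mathcal A_L$ and $\eta_{L,i}=c$ otherwise. Then $$\inf_{\boldsymbol\delta\in\mathcal H_L}t_{\mathrm R,\phi}(\boldsymbol z,\boldsymbol y-\boldsymbol z\circ\boldsymbol m\circ\boldsymbol\delta)=t_{\mathrm R,\phi}(\boldsymbol z,\boldsymbol y-\boldsymbol z\circ\boldsymbol m\circ\boldsymbol\eta_L)$$ for either the rank-sum or the Mann–Whitney-type statistic.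
   Context: $\overline{\mathbb R}=\mathbb R\cup\{\pm\infty\}$; $\circ$ is the entrywise product (with $0\cdot\delta_i=0$, so coordinates with $z_im_i=0$ are unchanged). For $1\le i,j\le n$ and $y,y'\in\overline{\mathbb R}$, $\psi_{i,j}(y,y')=\mathbf 1\{y>y'\}+\mathbf 1\{y=y'\}\mathbf 1\{i\ge j\}$; $\mathrm{rank}_i(\boldsymbol y)=\sum_{j=1}^n\psi_{i,j}(y_i,y_j)$. $\phi$ is a fixed nondecreasing real function on the nonnegative integers. Rank-sum statistic $t_{\mathrm R,\phi}(\boldsymbol z,\boldsymbol y)=\sum_iz_i\phi(\mathrm{rank}_i(\boldsymbol y))$; Mann–Whitney-type statistic $t_{\mathrm R,\phi}(\boldsymbol z,\boldsymbol y)=\sum_iz_i\phi(\sum_j(1-z_j)\psi_{i,j}(y_i,y_j))$. *)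

theory Defs
  imports "HOL-Library.Extended_Real"
begin

text \<open>Units are indexed by 1..n. Treatment and missingness indicators are booleans
  (True = 1, False = 0).\<close>

definition psi :: "nat \<Rightarrow> nat \<Rightarrow> ereal \<Rightarrow> ereal \<Rightarrow> nat" where
  "psi i j y y' = (if y > y' then 1 else 0) + (if y = y' \<and> i \<ge> j then 1 else 0)"

definition rnk :: "nat \<Rightarrow> (nat \<Rightarrow> ereal) \<Rightarrow> nat \<Rightarrow> nat" where
  "rnk n y i = (\<Sum>j\<in>{1..n}. psi i j (y i) (y j))"

definition t_rank :: "nat \<Rightarrow> (nat \<Rightarrow> real) \<Rightarrow> (nat \<Rightarrow> bool) \<Rightarrow> (nat \<Rightarrow> ereal) \<Rightarrow> real" where
  "t_rank n \<phi> z y = (\<Sum>i\<in>{1..n}. (if z i then 1 else 0) * \<phi> (rnk n y i))"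

definition t_mw :: "nat \<Rightarrow> (nat \<Rightarrow> real) \<Rightarrow> (nat \<Rightarrow> bool) \<Rightarrow> (nat \<Rightarrow> ereal) \<Rightarrow> real" where
  "t_mw n \<phi> z y = (\<Sum>i\<in>{1..n}. (if z i then 1 else 0) *
      \<phi> (\<Sum>j\<in>{1..n}. (if z j then 0 else 1) * psi i j (y i) (y j)))"

definition shift :: "(nat \<Rightarrow> bool) \<Rightarrow> (nat \<Rightarrow> bool) \<Rightarrow> (nat \<Rightarrow> ereal) \<Rightarrow> (nat \<Rightarrow> real) \<Rightarrow> nat \<Rightarrow> ereal" where
  "shift z m y \<delta> i = (if z i \<and> m i then y i - ereal (\<delta> i) else y i)"

definition N11 :: "nat \<Rightarrow> (nat \<Rightarrow> bool) \<Rightarrow> (nat \<Rightarrow> bool) \<Rightarrow> nat set" where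
  "N11 n z m = {j\<in>{1..n}. z j \<and> m j}"

definition N01 :: "nat \<Rightarrow> (nat \<Rightarrow> bool) \<Rightarrow> (nat \<Rightarrow> bool) \<Rightarrow> nat set" where
  "N01 n z m = {j\<in>{1..n}. \<not> z j \<and> m j}"

definition H :: "nat \<Rightarrow> (nat \<Rightarrow> bool) \<Rightarrow> (nat \<Rightarrow> bool) \<Rightarrow> nat \<Rightarrow> real \<Rightarrow> (nat \<Rightarrow> real) set" where
  "H n z m L c = {\<delta>. card {i\<in>N11 n z m. \<delta> i > c} \<le> L}"

text \<open>\<open>A_L\<close>: the \<open>L\<close> elements of \<open>N11\<close> with the largest ranks \<open>rank_j(y)\<close>, i.e. those
  exceeded in rank by fewer than \<open>L\<close> elements of \<open>N11\<close>.\<close>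
definition A :: "nat \<Rightarrow> (nat \<Rightarrow> bool) \<Rightarrow> (nat \<Rightarrow> bool) \<Rightarrow> (nat \<Rightarrow> ereal) \<Rightarrow> nat \<Rightarrow> nat set" where
  "A n z m y L = {j\<in>N11 n z m. card {k\<in>N11 n z m. rnk n y k > rnk n y j} < L}"

definition gam :: "nat \<Rightarrow> (nat \<Rightarrow> bool) \<Rightarrow> (nat \<Rightarrow> bool) \<Rightarrow> (nat \<Rightarrow> ereal) \<Rightarrow> real \<Rightarrow> real" where
  "gam n z m y \<kappa> = real_of_ereal (Max (y ` N11 n z m)) - real_of_ereal (Min (y ` N01 n z m)) + \<kappa>"

definition eta :: "nat \<Rightarrow> (nat \<Rightarrow> bool) \<Rightarrow> (nat \<Rightarrow> bool) \<Rightarrow> (nat \<Rightarrow> ereal) \<Rightarrow> nat \<Rightarrow> real \<Rightarrow> real \<Rightarrow> nat \<Rightarrow> real" where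
  "eta n z m y L c \<kappa> i = (if i \<in> A n z m y L then gam n z m y \<kappa> else c)"

end

(* Lowering a treated unit's outcome never increases either statistic, and the shift by gamma
   already places a unit below every observed control, the least any shift can achieve; every other
   unit of N11 is best shifted by exactly c.  Which L units get the large shift is settled by an
   exchange argument: at shift c each unit's contribution is monotone in its tie-broken rank, so the
   saving is largest for the L units of largest rank.  For the Mann-Whitney statistic a unit's
   contribution only depends on its own position relative to the unshifted controls.  For the
   rank-sum statistic the treated ranks are the complement of the control ranks in {1..n}; the shift
   eta maximises the rank of every control, and raising the control ranks can only lower the sum of
   phi over treated ranks (Abel summation over the thresholds s <= rank). *)

theory Submission
  imports Defs "HOL-Library.Product_Lexorder"
begin

(* Ties in y are broken by the unit index, so rank_i(y) is the position of (y_i, i) in the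
   lexicographic order on pairs. *)
lemma psi_lex: "psi i j a b = of_bool ((b, j) \<le> (a, i))"
  by (auto simp: psi_def less_eq_prod_def)

lemma psi_mono_left: "(a, i) \<le> (a', i') \<Longrightarrow> psi i j a b \<le> psi i' j a' b"
  unfolding psi_lex by (auto intro: order_trans)

lemma psi_antimono_right: "(b, j) \<le> (b', j') \<Longrightarrow> psi i j' a b' \<le> psi i j a b"
  unfolding psi_lex by (auto intro: order_trans)

lemma psi_ereal_right_le: "psi i j a (ereal v) \<le> of_bool (a \<noteq> -\<infinity>)"
  by (auto simp: psi_lex less_eq_prod_def)

lemma psi_ereal_left_ge: "of_bool (b = -\<infinity>) \<le> psi i j (ereal v) b"
  by (auto simp: psi_lex less_eq_prod_def)

lemma rnk_eq_card: "rnk n w i = card {j\<in>{1..n}. (w j, j) \<le> (w i, i)}"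
  unfolding rnk_def psi_lex
  by (simp add: Int_def del: less_eq_prod_simp)

lemma rnk_less_iff:
  assumes "k \<in> {1..n}"
  shows "rnk n w i < rnk n w k \<longleftrightarrow> (w i, i) < (w k, k)"
proof
  assume lt: "(w i, i) < (w k, k)"
  have "{j\<in>{1..n}. (w j, j) \<le> (w i, i)} \<subseteq> {j\<in>{1..n}. (w j, j) \<le> (w k, k)}"
    by (auto simp del: less_eq_prod_simp intro: order_trans[OF _ less_imp_le[OF lt]])
  moreover have "k \<notin> {j\<in>{1..n}. (w j, j) \<le> (w i, i)}"
    using lt by (simp del: less_eq_prod_simp less_prod_simp add: not_le)
  ultimately have "{j\<in>{1..n}. (w j, j) \<le> (w i, i)} \<subset> {j\<in>{1..n}. (w j, j) \<le> (w k, k)}"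
    using assms by blast
  then show "rnk n w i < rnk n w k"
    unfolding rnk_eq_card by (simp add: psubset_card_mono)
next
  assume "rnk n w i < rnk n w k"
  moreover have "rnk n w k \<le> rnk n w i" if "(w k, k) \<le> (w i, i)"
    unfolding rnk_eq_card by (rule card_mono) (use that in auto)
  ultimately show "(w i, i) < (w k, k)" by fastforce
qed

lemma inj_on_rnk: "inj_on (rnk n w) {1..n}"
proof (rule inj_onI)
  fix i k assume "i \<in> {1..n}" "k \<in> {1..n}" "rnk n w i = rnk n w k"
  then have "\<not> (w i, i) < (w k, k)" "\<not> (w k, k) < (w i, i)"
    using rnk_less_iff by (metis less_irrefl)+
  then show "i = k" by auto
qed

lemma rnk_image: "rnk n w ` {1..n} = {1..n}"
proof (rule card_subset_eq)
  show "card (rnk n w ` {1..n}) = card {1..n}"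
    by (rule card_image[OF inj_on_rnk])
  show "rnk n w ` {1..n} \<subseteq> {1..n}"
  proof clarify
    fix i assume i: "i \<in> {1..n}"
    have "{j\<in>{1..n}. (w j, j) \<le> (w i, i)} \<noteq> {}"
      using i by (auto simp del: less_eq_prod_simp)
    then have "1 \<le> rnk n w i"
      unfolding rnk_eq_card by (simp add: Suc_leI card_gt_0_iff del: less_eq_prod_simp)
    moreover have "rnk n w i \<le> card {1..n}"
      unfolding rnk_eq_card by (rule card_mono) blast+
    ultimately show "rnk n w i \<in> {1..n}" by simp
  qed
qed simp

lemma card_rnk_ge: "card {i\<in>{1..n}. s \<le> rnk n w i} = card {x\<in>{1..n}. s \<le> x}"
proof -
  have "rnk n w ` {i\<in>{1..n}. s \<le> rnk n w i} = {x\<in>rnk n w ` {1..n}. s \<le> x}"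
    by blast
  also have "\<dots> = {x\<in>{1..n}. s \<le> x}"
    by (simp only: rnk_image)
  finally have "rnk n w ` {i\<in>{1..n}. s \<le> rnk n w i} = {x\<in>{1..n}. s \<le> x}" .
  moreover have "inj_on (rnk n w) {i\<in>{1..n}. s \<le> rnk n w i}"
    by (rule inj_on_subset[OF inj_on_rnk]) auto
  ultimately show ?thesis by (metis card_image)
qed

lemma telescope_increments:
  fixes \<phi> :: "nat \<Rightarrow> real"
  assumes "r \<le> K"
  shows "\<phi> r = \<phi> 0 + (\<Sum>s=1..K. of_bool (s \<le> r) * (\<phi> s - \<phi> (s - 1)))"
proof -
  have "(\<Sum>s=1..K. of_bool (s \<le> r) * (\<phi> s - \<phi> (s - 1))) = (\<Sum>s=1..r. \<phi> s - \<phi> (s - 1))"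
    using assms by (intro sum.mono_neutral_cong_right) auto
  also have "\<dots> = \<phi> r - \<phi> 0"
    by (induction r) auto
  finally show ?thesis by simp
qed

lemma sum_comp_eq_tail_counts:
  fixes \<phi> :: "nat \<Rightarrow> real"
  assumes "finite T" "\<And>i. i \<in> T \<Longrightarrow> f i \<le> K"
  shows "(\<Sum>i\<in>T. \<phi> (f i))
    = card T * \<phi> 0 + (\<Sum>s=1..K. card {i\<in>T. s \<le> f i} * (\<phi> s - \<phi> (s - 1)))"
proof -
  have "(\<Sum>i\<in>T. \<phi> (f i))
      = (\<Sum>i\<in>T. \<phi> 0 + (\<Sum>s=1..K. of_bool (s \<le> f i) * (\<phi> s - \<phi> (s - 1))))"
    using assms(2) by (intro sum.cong refl telescope_increments)
  also have "\<dots> = card T * \<phi> 0 + (\<Sum>s=1..K. \<Sum>i\<in>T. of_bool (s \<le> f i) * (\<phi> s - \<phi> (s - 1)))"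
    by (simp add: sum.distrib sum.swap[of _ T])
  also have "\<dots> = card T * \<phi> 0 + (\<Sum>s=1..K. card {i\<in>T. s \<le> f i} * (\<phi> s - \<phi> (s - 1)))"
    using assms(1) by (simp add: sum_distrib_right[symmetric] Int_def)
  finally show ?thesis .
qed

lemma sum_comp_mono_le_of_tail_counts_le:
  fixes \<phi> :: "nat \<Rightarrow> real"
  assumes "mono \<phi>" "finite T"
    and "\<And>i. i \<in> T \<Longrightarrow> f i \<le> K" "\<And>i. i \<in> T \<Longrightarrow> g i \<le> K"
    and "\<And>s. card {i\<in>T. s \<le> f i} \<le> card {i\<in>T. s \<le> g i}"
  shows "(\<Sum>i\<in>T. \<phi> (f i)) \<le> (\<Sum>i\<in>T. \<phi> (g i))"
proof -
  have "\<phi> (s - 1) \<le> \<phi> s" for s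
    using \<open>mono \<phi>\<close> by (simp add: monoD)
  then have "(\<Sum>s=1..K. card {i\<in>T. s \<le> f i} * (\<phi> s - \<phi> (s - 1)))
      \<le> (\<Sum>s=1..K. card {i\<in>T. s \<le> g i} * (\<phi> s - \<phi> (s - 1)))"
    using assms(5) by (intro sum_mono mult_right_mono) auto
  moreover have "(\<Sum>i\<in>T. \<phi> (f i))
    = card T * \<phi> 0 + (\<Sum>s=1..K. card {i\<in>T. s \<le> f i} * (\<phi> s - \<phi> (s - 1)))"
    using assms(2,3) by (rule sum_comp_eq_tail_counts)
  moreover have "(\<Sum>i\<in>T. \<phi> (g i))
    = card T * \<phi> 0 + (\<Sum>s=1..K. card {i\<in>T. s \<le> g i} * (\<phi> s - \<phi> (s - 1)))"
    using assms(2,4) by (rule sum_comp_eq_tail_counts)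
  ultimately show ?thesis by linarith
qed

lemma t_rank_le_of_control_ranks_le:
  assumes "mono \<phi>"
    and control_ranks: "\<And>j. j \<in> {1..n} \<Longrightarrow> \<not> z j \<Longrightarrow> rnk n w' j \<le> rnk n w j"
  shows "t_rank n \<phi> z w \<le> t_rank n \<phi> z w'"
proof -
  define T where "T = {i\<in>{1..n}. z i}"
  define C where "C = {i\<in>{1..n}. \<not> z i}"
  \<comment> \<open>rnk is a permutation of \<open>{1..n}\<close>, so the treated tail counts are fixed by the control ranks.\<close>
  have tail_split: "card {i\<in>T. s \<le> rnk n v i} = card {x\<in>{1..n}. s \<le> x} - card {i\<in>C. s \<le> rnk n v i}"
    for v s
  proof -
    have "{i\<in>{1..n}. s \<le> rnk n v i} = {i\<in>T. s \<le> rnk n v i} \<union> {i\<in>C. s \<le> rnk n v i}"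
      unfolding T_def C_def by auto
    then have "card {i\<in>{1..n}. s \<le> rnk n v i} = card {i\<in>T. s \<le> rnk n v i} + card {i\<in>C. s \<le> rnk n v i}"
      by (simp add: card_Un_disjoint T_def C_def disjoint_iff)
    then show ?thesis using card_rnk_ge[of n s v] by linarith
  qed
  have "card {i\<in>C. s \<le> rnk n w' i} \<le> card {i\<in>C. s \<le> rnk n w i}" for s
    using control_ranks by (intro card_mono) (auto simp: C_def intro: order_trans)
  then have "card {i\<in>T. s \<le> rnk n w i} \<le> card {i\<in>T. s \<le> rnk n w' i}" for s
    by (simp add: tail_split diff_le_mono2)
  moreover have "rnk n v i \<le> n" if "i \<in> T" for v i
    using rnk_image[of n v] that by (auto simp: T_def)
  ultimately have "(\<Sum>i\<in>T. \<phi> (rnk n w i)) \<le> (\<Sum>i\<in>T. \<phi> (rnk n w' i))"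
    using assms(1) by (intro sum_comp_mono_le_of_tail_counts_le) (auto simp: T_def)
  moreover have "t_rank n \<phi> z v = (\<Sum>i\<in>T. \<phi> (rnk n v i))" for v
    unfolding t_rank_def T_def sum.inter_filter[OF finite_atLeastAtMost] by (intro sum.cong) auto
  ultimately show ?thesis by simp
qed

definition top_ranked :: "'a set \<Rightarrow> ('a \<Rightarrow> 'b::linorder) \<Rightarrow> nat \<Rightarrow> 'a set" where
  "top_ranked N r L = {j\<in>N. card {k\<in>N. r j < r k} < L}"

lemma card_ranked_above_less:
  fixes r :: "'a \<Rightarrow> 'b::linorder"
  assumes "finite N" "k \<in> N" "r i < r k"
  shows "card {x\<in>N. r k < r x} < card {x\<in>N. r i < r x}"
proof -
  have "{x\<in>N. r k < r x} \<subseteq> {x\<in>N. r i < r x} - {k}"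
    using assms(3) by (auto intro: less_trans)
  then have "card {x\<in>N. r k < r x} \<le> card ({x\<in>N. r i < r x} - {k})"
    using assms(1) by (intro card_mono) auto
  also have "\<dots> < card {x\<in>N. r i < r x}"
    using assms by (intro card_Diff1_less) auto
  finally show ?thesis .
qed

lemma card_top_ranked:
  assumes "finite N" "inj_on r N" "L \<le> card N"
  shows "card (top_ranked N r L) = L"
proof -
  define p where "p j = card {k\<in>N. r j < r k}" for j
  have "inj_on p N"
  proof (rule inj_onI)
    fix i k assume "i \<in> N" "k \<in> N" "p i = p k"
    then have "r i = r k"
      using card_ranked_above_less[OF \<open>finite N\<close> \<open>k \<in> N\<close>, of r i]
        card_ranked_above_less[OF \<open>finite N\<close> \<open>i \<in> N\<close>, of r k]
      unfolding p_def by (cases "r i" "r k" rule: linorder_cases) auto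
    then show "i = k"
      by (rule inj_onD[OF \<open>inj_on r N\<close> _ \<open>i \<in> N\<close> \<open>k \<in> N\<close>])
  qed
  moreover have "p ` N \<subseteq> {0..<card N}"
    unfolding p_def using \<open>finite N\<close> by (auto intro!: psubset_card_mono)
  ultimately have "p ` N = {0..<card N}"
    by (intro card_subset_eq) (auto simp: card_image)
  have "p ` top_ranked N r L = {x\<in>p ` N. x < L}"
    unfolding top_ranked_def p_def by blast
  also have "\<dots> = {0..<L}"
    using \<open>p ` N = {0..<card N}\<close> \<open>L \<le> card N\<close> by auto
  finally have "p ` top_ranked N r L = {0..<L}" .
  moreover have "inj_on p (top_ranked N r L)"
    using \<open>inj_on p N\<close> by (rule inj_on_subset) (auto simp: top_ranked_def)
  ultimately show ?thesis by (metis card_atLeastLessThan card_image diff_zero)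
qed

lemma ranked_below_top_ranked:
  assumes "finite N" "x \<in> N - top_ranked N r L" "y \<in> top_ranked N r L"
  shows "r x < r y"
proof (rule ccontr)
  assume "\<not> r x < r y"
  then have "card {k\<in>N. r x < r k} \<le> card {k\<in>N. r y < r k}"
    using \<open>finite N\<close> by (intro card_mono) auto
  then show False
    using assms(2,3) by (simp add: top_ranked_def)
qed

lemma sum_le_sum_of_card_eq:
  fixes f :: "'a \<Rightarrow> 'b::ordered_comm_monoid_add"
  assumes "finite X" "finite Y" "card X = card Y" "\<And>x y. x \<in> X \<Longrightarrow> y \<in> Y \<Longrightarrow> f x \<le> f y"
  shows "sum f X \<le> sum f Y"
proof -
  obtain g where g: "bij_betw g X Y"
    using finite_same_card_bij[OF assms(1-3)] by blast
  then have "sum f X \<le> (\<Sum>x\<in>X. f (g x))"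
    using assms(4) by (intro sum_mono) (auto simp: bij_betw_def)
  also have "\<dots> = sum f Y"
    using g by (rule sum.reindex_bij_betw)
  finally show ?thesis .
qed

lemma sum_le_sum_top_ranked:
  fixes h :: "'a \<Rightarrow> 'c::ordered_comm_monoid_add"
  assumes "finite N" "inj_on r N" "B \<subseteq> N" "card B = L"
    and h_mono: "\<And>i k. i \<in> N \<Longrightarrow> k \<in> N \<Longrightarrow> r i < r k \<Longrightarrow> h i \<le> h k"
  shows "sum h B \<le> sum h (top_ranked N r L)"
proof -
  let ?A = "top_ranked N r L"
  have fin: "finite B" "finite ?A"
    using assms(1,3) by (auto intro: finite_subset simp: top_ranked_def)
  have "card ?A = L"
    using assms(1-4) card_mono[OF assms(1,3)] by (intro card_top_ranked) auto
  then have "card (B - ?A) = card (?A - B)"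
    using fin \<open>card B = L\<close> by (simp add: card_Diff_subset_Int Int_commute)
  moreover have "h x \<le> h y" if "x \<in> B - ?A" "y \<in> ?A - B" for x y
    using that assms(1,3) by (intro h_mono ranked_below_top_ranked[of N]) (auto simp: top_ranked_def)
  ultimately have "sum h (B - ?A) \<le> sum h (?A - B)"
    using fin by (intro sum_le_sum_of_card_eq) auto
  then show ?thesis
    using fin by (metis add_left_mono inf_commute sum.Int_Diff)
qed

lemma sum_replace_top_ranked_le:
  fixes h F :: "'a \<Rightarrow> real"
  assumes "finite N" "inj_on r N" "L \<le> card N" "S \<subseteq> N" "card S \<le> L"
    and h_mono: "\<And>i k. i \<in> N \<Longrightarrow> k \<in> N \<Longrightarrow> r i < r k \<Longrightarrow> h i \<le> h k"
    and M_le_h: "\<And>i. i \<in> N \<Longrightarrow> M \<le> h i"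
    and M_le_F: "\<And>i. i \<in> S \<Longrightarrow> M \<le> F i"
    and h_le_F: "\<And>i. i \<in> N - S \<Longrightarrow> h i \<le> F i"
  shows "(\<Sum>i\<in>N. if i \<in> top_ranked N r L then M else h i) \<le> (\<Sum>i\<in>N. F i)"
proof -
  have replace: "(\<Sum>i\<in>N. if i \<in> B then M else h i) = sum h N - (\<Sum>i\<in>B. h i - M)"
    if "B \<subseteq> N" for B
  proof -
    have "(\<Sum>i\<in>N. if i \<in> B then M else h i) = sum h (N - B) + (\<Sum>i\<in>B. M)"
      using \<open>finite N\<close> that by (simp add: sum.If_cases Int_absorb1 Int_absorb2 Diff_eq)
    then show ?thesis
      using sum.subset_diff[OF that \<open>finite N\<close>, of h] by (simp add: sum_subtractf)
  qed
  have "finite S"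
    using assms(1,4) by (rule finite_subset[rotated])
  obtain B where B: "S \<subseteq> B" "B \<subseteq> N" "card B = L"
  proof -
    have "L - card S \<le> card (N - S)"
      using assms(3,4) \<open>finite S\<close> by (simp add: card_Diff_subset)
    then obtain U where "U \<subseteq> N - S" "card U = L - card S"
      by (meson obtain_subset_with_card_n)
    moreover have "finite U"
      using \<open>U \<subseteq> N - S\<close> \<open>finite N\<close> by (meson finite_Diff finite_subset)
    moreover have "card (S \<union> U) = L"
      using card_Un_disjoint[of S U] \<open>finite S\<close> \<open>finite U\<close> \<open>U \<subseteq> N - S\<close>
        \<open>card U = L - card S\<close> \<open>card S \<le> L\<close> by auto
    ultimately show ?thesis
      using that[of "S \<union> U"] assms(4) by blast
  qed
  have "top_ranked N r L \<subseteq> N"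
    by (auto simp: top_ranked_def)
  then have "(\<Sum>i\<in>N. if i \<in> top_ranked N r L then M else h i) \<le> (\<Sum>i\<in>N. if i \<in> B then M else h i)"
    unfolding replace[OF B(2)] replace[OF \<open>top_ranked N r L \<subseteq> N\<close>]
    using sum_le_sum_top_ranked[OF assms(1,2) B(2,3), of "\<lambda>i. h i - M"] h_mono by auto
  also have "\<dots> \<le> (\<Sum>i\<in>N. if i \<in> S then M else h i)"
    using B(1) M_le_h by (intro sum_mono) auto
  also have "\<dots> \<le> (\<Sum>i\<in>N. F i)"
    using M_le_F h_le_F by (intro sum_mono) auto
  finally show ?thesis .
qed

locale shift_problem =
  fixes n L :: nat and z m :: "nat \<Rightarrow> bool" and y :: "nat \<Rightarrow> ereal" and c \<kappa> :: real
  assumes y_fin: "\<And>i. i \<in> {1..n} \<Longrightarrow> m i \<Longrightarrow> y i \<noteq> \<infinity> \<and> y i \<noteq> -\<infinity>"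
    and y_inf: "\<And>i. i \<in> {1..n} \<Longrightarrow> \<not> m i \<Longrightarrow> y i = \<infinity> \<or> y i = -\<infinity>"
    and L_le: "L \<le> card (N11 n z m)"
    and kappa: "\<kappa> > 0"
begin

abbreviation "N \<equiv> N11 n z m"
abbreviation "\<gamma> \<equiv> gam n z m y \<kappa>"
abbreviation "\<eta> \<equiv> eta n z m y L c \<kappa>"

definition Y :: "nat \<Rightarrow> real" where
  "Y i = real_of_ereal (y i)"

lemma finite_N: "finite N"
  by (simp add: N11_def)

lemma N_subset: "N \<subseteq> {1..n}"
  by (auto simp: N11_def)

lemma y_N: "i \<in> N \<Longrightarrow> y i = ereal (Y i)"
  using y_fin[of i] by (cases "y i") (auto simp: N11_def Y_def)

lemma y_N01: "j \<in> N01 n z m \<Longrightarrow> y j = ereal (Y j)"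
  using y_fin[of j] by (cases "y j") (auto simp: N01_def Y_def)

lemma shift_N: "i \<in> N \<Longrightarrow> shift z m y d i = ereal (Y i - d i)"
  using y_N[of i] by (auto simp: shift_def N11_def)

lemma shift_notin_N: "i \<in> {1..n} \<Longrightarrow> i \<notin> N \<Longrightarrow> shift z m y d i = y i"
  by (auto simp: shift_def N11_def)

lemma eta_eq: "\<eta> i = (if i \<in> top_ranked N (rnk n y) L then \<gamma> else c)"
  by (simp add: eta_def A_def top_ranked_def)

lemma inj_on_rnk_N: "inj_on (rnk n y) N"
  using inj_on_rnk N_subset by (rule inj_on_subset)

lemma eta_mem_H: "\<eta> \<in> H n z m L c"
proof -
  have "{i\<in>N. c < \<eta> i} \<subseteq> top_ranked N (rnk n y) L"
    by (auto simp: eta_eq)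
  then have "card {i\<in>N. c < \<eta> i} \<le> card (top_ranked N (rnk n y) L)"
    by (intro card_mono) (auto simp: top_ranked_def finite_N)
  then show ?thesis
    using card_top_ranked[OF finite_N inj_on_rnk_N L_le] by (simp add: H_def)
qed

lemma gam_shift_below_observed_control:
  assumes "i \<in> N" "j \<in> N01 n z m"
  shows "ereal (Y i - \<gamma>) < y j"
proof -
  have fin: "finite (N01 n z m)"
    by (simp add: N01_def)
  obtain k where k: "k \<in> N" "Max (y ` N) = y k"
    using assms(1) finite_N Max_in[of "y ` N"] by fastforce
  obtain l where l: "l \<in> N01 n z m" "Min (y ` N01 n z m) = y l"
    using assms(2) fin Min_in[of "y ` N01 n z m"] by fastforce
  have "y i \<le> y k" "y l \<le> y j"
    using assms finite_N fin k l by (metis Max_ge Min_le finite_imageI image_eqI)+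
  then have "Y i \<le> Y k" "Y l \<le> Y j"
    by (simp_all add: y_N y_N01 assms k l)
  moreover have "\<gamma> = Y k - Y l + \<kappa>"
    by (simp add: gam_def Y_def k l)
  ultimately show ?thesis
    using kappa by (simp add: y_N01[OF assms(2)])
qed

lemma gam_shift_below_controls:
  assumes "i \<in> N" "j \<in> {1..n}" "\<not> z j"
  shows "y j = -\<infinity> \<or> ereal (Y i - \<gamma>) < y j"
proof (cases "m j")
  case True
  then have "j \<in> N01 n z m"
    using assms by (simp add: N01_def)
  then show ?thesis
    using gam_shift_below_observed_control[OF assms(1)] by blast
next
  case False
  then show ?thesis
    using y_inf[OF assms(2)] by auto
qed

lemma psi_control_gam_shift:
  assumes "i \<in> N" "j \<in> {1..n}" "\<not> z j"
  shows "psi j i (y j) (ereal (Y i - \<gamma>)) = of_bool (y j \<noteq> -\<infinity>)"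
  using gam_shift_below_controls[OF assms] by (auto simp: psi_lex)

lemma psi_gam_shift_control:
  assumes "i \<in> N" "j \<in> {1..n}" "\<not> z j"
  shows "psi i j (ereal (Y i - \<gamma>)) (y j) = of_bool (y j = -\<infinity>)"
  using gam_shift_below_controls[OF assms] by (auto simp: psi_lex)

lemma rnk_less_imp_shifted_less:
  assumes "i \<in> N" "k \<in> N" "rnk n y i < rnk n y k"
  shows "(ereal (Y i - c), i) < (ereal (Y k - c), k)"
proof -
  have "(y i, i) < (y k, k)"
    using assms N_subset rnk_less_iff by blast
  then show ?thesis
    using y_N[OF assms(1)] y_N[OF assms(2)] by auto
qed

lemma sum_shift_eta_le:
  fixes G :: "nat \<Rightarrow> ereal \<Rightarrow> real"
  assumes G_mono: "\<And>i k u v. i \<in> N \<Longrightarrow> k \<in> N \<Longrightarrow> (u, i) \<le> (v, k) \<Longrightarrow> G i u \<le> G k v"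
    and G_ge: "\<And>i v. i \<in> N \<Longrightarrow> M \<le> G i (ereal v)"
    and G_gam: "\<And>i. i \<in> N \<Longrightarrow> G i (ereal (Y i - \<gamma>)) = M"
    and "\<delta> \<in> H n z m L c"
  shows "(\<Sum>i\<in>N. G i (shift z m y \<eta> i)) \<le> (\<Sum>i\<in>N. G i (shift z m y \<delta> i))"
proof -
  let ?S = "{i\<in>N. c < \<delta> i}"
  have "(\<Sum>i\<in>N. G i (shift z m y \<eta> i))
      = (\<Sum>i\<in>N. if i \<in> top_ranked N (rnk n y) L then M else G i (ereal (Y i - c)))"
    by (intro sum.cong) (auto simp: shift_N eta_eq G_gam)
  also have "\<dots> \<le> (\<Sum>i\<in>N. G i (shift z m y \<delta> i))"
  proof (rule sum_replace_top_ranked_le[OF finite_N inj_on_rnk_N L_le])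
    show "?S \<subseteq> N" "card ?S \<le> L"
      using \<open>\<delta> \<in> H n z m L c\<close> by (auto simp: H_def)
    show "G i (ereal (Y i - c)) \<le> G k (ereal (Y k - c))"
      if "i \<in> N" "k \<in> N" "rnk n y i < rnk n y k" for i k
      using rnk_less_imp_shifted_less[OF that] by (intro G_mono[OF that(1,2)] less_imp_le)
    show "M \<le> G i (ereal (Y i - c))" if "i \<in> N" for i
      using that by (rule G_ge)
    show "M \<le> G i (shift z m y \<delta> i)" if "i \<in> ?S" for i
      using that G_ge by (simp add: shift_N)
    show "G i (ereal (Y i - c)) \<le> G i (shift z m y \<delta> i)" if "i \<in> N - ?S" for i
      using that by (auto simp: shift_N intro!: G_mono)
  qed
  finally show ?thesis .
qed

lemma rnk_shift_control:
  assumes "j \<in> {1..n}" "\<not> z j"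
  shows "rnk n (shift z m y d) j
    = (\<Sum>i\<in>N. psi j i (y j) (shift z m y d i)) + (\<Sum>i\<in>{1..n} - N. psi j i (y j) (y i))"
proof -
  have "rnk n (shift z m y d) j = (\<Sum>i\<in>{1..n}. psi j i (y j) (shift z m y d i))"
    using assms by (simp add: rnk_def shift_def)
  also have "\<dots> = (\<Sum>i\<in>{1..n} - N. psi j i (y j) (shift z m y d i))
      + (\<Sum>i\<in>N. psi j i (y j) (shift z m y d i))"
    by (rule sum.subset_diff[OF N_subset finite_atLeastAtMost])
  also have "(\<Sum>i\<in>{1..n} - N. psi j i (y j) (shift z m y d i)) = (\<Sum>i\<in>{1..n} - N. psi j i (y j) (y i))"
    by (intro sum.cong refl arg_cong[where f = "psi j _ (y j)"] shift_notin_N) auto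
  finally show ?thesis by simp
qed

lemma rnk_control_shift_le_eta:
  assumes "\<delta> \<in> H n z m L c" "j \<in> {1..n}" "\<not> z j"
  shows "rnk n (shift z m y \<delta>) j \<le> rnk n (shift z m y \<eta>) j"
proof -
  have "(\<Sum>i\<in>N. - real (psi j i (y j) (shift z m y \<eta> i)))
      \<le> (\<Sum>i\<in>N. - real (psi j i (y j) (shift z m y \<delta> i)))"
  proof (rule sum_shift_eta_le[OF _ _ _ assms(1)])
    show "- real (psi j i (y j) u) \<le> - real (psi j k (y j) v)" if "(u, i) \<le> (v, k)" for i k u v
      using psi_antimono_right[OF that] by simp
    show "- real (of_bool (y j \<noteq> -\<infinity>)) \<le> - real (psi j i (y j) (ereal v))" for i v
      using psi_ereal_right_le[of j i "y j" v] by linarith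
    show "- real (psi j i (y j) (ereal (Y i - \<gamma>))) = - real (of_bool (y j \<noteq> -\<infinity>))" if "i \<in> N" for i
      using psi_control_gam_shift[OF that assms(2,3)] by simp
  qed
  then have "(\<Sum>i\<in>N. psi j i (y j) (shift z m y \<delta> i)) \<le> (\<Sum>i\<in>N. psi j i (y j) (shift z m y \<eta> i))"
    by (simp add: sum_negf flip: of_nat_sum)
  then show ?thesis
    by (simp add: rnk_shift_control[OF assms(2,3)])
qed

lemma t_rank_eta_le:
  assumes "mono \<phi>" "\<delta> \<in> H n z m L c"
  shows "t_rank n \<phi> z (shift z m y \<eta>) \<le> t_rank n \<phi> z (shift z m y \<delta>)"
  using assms by (intro t_rank_le_of_control_ranks_le rnk_control_shift_le_eta)

definition controls_below :: "nat \<Rightarrow> ereal \<Rightarrow> nat" where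
  "controls_below i v = (\<Sum>j\<in>{1..n}. (if z j then 0 else 1) * psi i j v (y j))"

lemma controls_below_mono: "(u, i) \<le> (v, k) \<Longrightarrow> controls_below i u \<le> controls_below k v"
  unfolding controls_below_def by (intro sum_mono mult_left_mono psi_mono_left) auto

lemma t_mw_shift:
  "t_mw n \<phi> z (shift z m y d)
    = (\<Sum>i\<in>N. \<phi> (controls_below i (shift z m y d i)))
      + (\<Sum>i\<in>{1..n} - N. (if z i then 1 else 0) * \<phi> (controls_below i (y i)))"
proof -
  have "(\<Sum>j\<in>{1..n}. (if z j then 0 else 1) * psi i j v (shift z m y d j)) = controls_below i v" for i v
    unfolding controls_below_def by (intro sum.cong refl) (simp add: shift_def)
  then have "t_mw n \<phi> z (shift z m y d)
      = (\<Sum>i\<in>{1..n}. (if z i then 1 else 0) * \<phi> (controls_below i (shift z m y d i)))"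
    by (simp add: t_mw_def)
  also have "\<dots> = (\<Sum>i\<in>{1..n} - N. (if z i then 1 else 0) * \<phi> (controls_below i (shift z m y d i)))
      + (\<Sum>i\<in>N. (if z i then 1 else 0) * \<phi> (controls_below i (shift z m y d i)))"
    by (rule sum.subset_diff[OF N_subset finite_atLeastAtMost])
  also have "(\<Sum>i\<in>{1..n} - N. (if z i then 1 else 0) * \<phi> (controls_below i (shift z m y d i)))
      = (\<Sum>i\<in>{1..n} - N. (if z i then 1 else 0) * \<phi> (controls_below i (y i)))"
    by (intro sum.cong refl) (simp add: shift_notin_N)
  also have "(\<Sum>i\<in>N. (if z i then 1 else 0) * \<phi> (controls_below i (shift z m y d i)))
      = (\<Sum>i\<in>N. \<phi> (controls_below i (shift z m y d i)))"
    by (intro sum.cong refl) (simp add: N11_def)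
  finally show ?thesis by simp
qed

lemma t_mw_eta_le:
  assumes "mono \<phi>" "\<delta> \<in> H n z m L c"
  shows "t_mw n \<phi> z (shift z m y \<eta>) \<le> t_mw n \<phi> z (shift z m y \<delta>)"
proof -
  define K where "K = (\<Sum>j\<in>{1..n}. (if z j then 0 else 1) * of_bool (y j = -\<infinity>) :: nat)"
  have "(\<Sum>i\<in>N. \<phi> (controls_below i (shift z m y \<eta> i)))
      \<le> (\<Sum>i\<in>N. \<phi> (controls_below i (shift z m y \<delta> i)))"
  proof (rule sum_shift_eta_le[OF _ _ _ assms(2)])
    show "\<phi> (controls_below i u) \<le> \<phi> (controls_below k v)" if "(u, i) \<le> (v, k)" for i k u v
      using \<open>mono \<phi>\<close> controls_below_mono[OF that] by (rule monoD)
    show "\<phi> K \<le> \<phi> (controls_below i (ereal v))" for i v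
    proof (rule monoD[OF \<open>mono \<phi>\<close>])
      show "K \<le> controls_below i (ereal v)"
        unfolding K_def controls_below_def by (intro sum_mono mult_left_mono psi_ereal_left_ge) simp
    qed
    show "\<phi> (controls_below i (ereal (Y i - \<gamma>))) = \<phi> K" if "i \<in> N" for i
      unfolding K_def controls_below_def
      by (intro arg_cong[where f = \<phi>] sum.cong) (auto simp: psi_gam_shift_control[OF that])
  qed
  then show ?thesis
    by (simp add: t_mw_shift)
qed

end

theorem lemma3:
  fixes n L :: nat and z m :: "nat \<Rightarrow> bool" and y :: "nat \<Rightarrow> ereal"
    and \<phi> :: "nat \<Rightarrow> real" and c \<kappa> :: real
  assumes phi_mono: "mono \<phi>"
    and y_fin: "\<And>i. i \<in> {1..n} \<Longrightarrow> m i \<Longrightarrow> y i \<noteq> \<infinity> \<and> y i \<noteq> -\<infinity>"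
    and y_inf: "\<And>i. i \<in> {1..n} \<Longrightarrow> \<not> m i \<Longrightarrow> y i = \<infinity> \<or> y i = -\<infinity>"
    and L_le: "L \<le> card (N11 n z m)"
    and kappa: "\<kappa> > 0"
    and ctrl_ne: "N01 n z m \<noteq> {}"
  shows "(INF \<delta>\<in>H n z m L c. t_rank n \<phi> z (shift z m y \<delta>))
           = t_rank n \<phi> z (shift z m y (eta n z m y L c \<kappa>))
       \<and> (INF \<delta>\<in>H n z m L c. t_mw n \<phi> z (shift z m y \<delta>))
           = t_mw n \<phi> z (shift z m y (eta n z m y L c \<kappa>))"
proof -
  interpret shift_problem n L z m y c \<kappa>
    by unfold_locales (fact y_fin y_inf L_le kappa)+
  have INF_eq: "(INF \<delta>\<in>H n z m L c. f \<delta>) = f \<eta>"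
    if "\<And>\<delta>. \<delta> \<in> H n z m L c \<Longrightarrow> f \<eta> \<le> f \<delta>" for f :: "(nat \<Rightarrow> real) \<Rightarrow> real"
    using eta_mem_H that by (intro cInf_eq_minimum) auto
  show ?thesis
    by (intro conjI INF_eq t_rank_eta_le[OF phi_mono] t_mw_eta_le[OF phi_mono])
qed

end
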